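(* Let $n\geqslant 3$, $N=2^n-1$, and let $F(\mathbf{1})$ be the value at $\mathbf{s}=(1,\dots,1)$ of the holomorphic continuation of $F(\mathbf{s})=G(\mathbf{s})\prod_{h=1}^N\zeta(s_h)^{-1}$. Then $$F(\mathbf{1})=\prod_p\left(1-\frac1p\right)^{2^n-1}\left(1+\sum_{k\geqslant 1}\frac{(k+1)^n-k^n}{p^k}\right).$$
   Context: $G(\mathbf{s})=\sum_{\mathbf{z}}\prod_{h=1}^Nz_h^{-s_h}$, the sum over $N$-tuples $\mathbf{z}$ of positive integers which are reduced: writing $h=\sum_j\varepsilon_j(h)2^{j-1}$ with $\varepsilon_j(h)\in\{0,1\}$ and $h\preceq\ell$ iff $\varepsilon_j(h)\leqslant\varepsilon_j(\ell)$ for all $j$, one requires $\gcd(z_h,z_\ell)=1$ whenever $h,\ell$ are $\preceq$-incomparable. $G$ converges for $\mathrm{Re}(s_h)>1$ and $F$ extends holomorphically to $\mathrm{Re}(s_h)>1/2$. The product is over primes $p$. *)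

theory Defs
  imports "HOL-Analysis.Analysis"
begin

definition bit_le :: "nat \<Rightarrow> nat \<Rightarrow> bool" where
  "bit_le h l \<longleftrightarrow> (\<forall>j. bit h j \<longrightarrow> bit l j)"

definition reduced_tuples :: "nat \<Rightarrow> (nat \<Rightarrow> nat) set" where
  "reduced_tuples N = {z. (\<forall>h\<in>{1..N}. z h \<ge> 1) \<and> (\<forall>h. h \<notin> {1..N} \<longrightarrow> z h = 0) \<and>
     (\<forall>h\<in>{1..N}. \<forall>l\<in>{1..N}. \<not> bit_le h l \<and> \<not> bit_le l h \<longrightarrow> coprime (z h) (z l))}"

definition G_series :: "nat \<Rightarrow> (nat \<Rightarrow> complex) \<Rightarrow> complex" where
  "G_series N s = (\<Sum>\<^sub>\<infinity> z \<in> reduced_tuples N. \<Prod>h\<in>{1..N}. of_nat (z h) powr (- s h))"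

text \<open>Riemann zeta function given by its Dirichlet series (used only for Re s > 1).\<close>
definition zeta_series :: "complex \<Rightarrow> complex" where
  "zeta_series s = (\<Sum>\<^sub>\<infinity> m \<in> {1::nat..}. of_nat m powr (- s))"

definition F_series :: "nat \<Rightarrow> (nat \<Rightarrow> complex) \<Rightarrow> complex" where
  "F_series N s = G_series N s * (\<Prod>h\<in>{1..N}. inverse (zeta_series (s h)))"

definition half_region :: "nat \<Rightarrow> real \<Rightarrow> (nat \<Rightarrow> complex) set" where
  "half_region N a = {s. (\<forall>h\<in>{1..N}. Re (s h) > a) \<and> (\<forall>h. h \<notin> {1..N} \<longrightarrow> s h = 0)}"

text \<open>Holomorphic in several variables on an open set: continuous and
  holomorphic in each variable separately (equivalent by Osgood's lemma).\<close>
definition multi_holomorphic_on ::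
  "nat \<Rightarrow> ((nat \<Rightarrow> complex) \<Rightarrow> complex) \<Rightarrow> real \<Rightarrow> bool" where
  "multi_holomorphic_on N f a \<longleftrightarrow> continuous_on (half_region N a) f \<and>
     (\<forall>s\<in>half_region N a. \<forall>h\<in>{1..N}.
        (\<lambda>w. f (s(h := w))) holomorphic_on {w. Re w > a})"

definition one_point :: "nat \<Rightarrow> nat \<Rightarrow> complex" where
  "one_point N h = (if h \<in> {1..N} then 1 else 0)"

definition euler_factor :: "nat \<Rightarrow> nat \<Rightarrow> real" where
  "euler_factor n p = (1 - 1 / real p) ^ (2 ^ n - 1) *
     (1 + (\<Sum>\<^sub>\<infinity> k \<in> {1::nat..}. (real (k + 1) ^ n - real k ^ n) / real p ^ k))"

end

theory Submission
  imports Defs "HOL-Complex_Analysis.Complex_Analysis"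
begin

text \<open>
  The \<open>p\<close>-adic valuations of the entries of a reduced tuple form an exponent vector supported
  on a chain of the bitwise order, and each choice of such vectors, one for every prime, comes
  from exactly one reduced tuple. Hence \<open>G\<close>, and with it \<open>F\<close>, is an Euler product; the factor of
  \<open>F\<close> at \<open>p\<close> is a polynomial in the \<open>y\<^sub>h = p powr - s\<^sub>h\<close>, namely a sum over chains. The same
  sum over all subsets equals \<open>1\<close>, so the factor differs from \<open>1\<close> only by the terms of the
  non-chains, which have degree at least two. The Euler product therefore converges locally
  uniformly for \<open>Re s\<^sub>h > 1/2\<close>, which gives the continuation.

  At \<open>s = 1\<close> all \<open>y\<^sub>h\<close> equal \<open>x = 1/p\<close>, and the factor is \<open>(1 - x)\<^sup>N\<close> times a weighted count of
  chains of nonzero numbers below \<open>2\<^sup>n - 1\<close>, i.e. of chains of nonempty subsets of an \<open>n\<close>-set.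
  Sorting the chains by their largest element gives a binomial recursion in the number of bits,
  which the moments \<open>(1 - x) \<Sum>\<^sub>k (k + 1)\<^sup>m x\<^sup>k\<close> satisfy as well.
\<close>

section \<open>Infinite sums and products\<close>

lemma norm_prod_le_exp_sum:
  fixes f :: "nat \<Rightarrow> 'a::{real_normed_div_algebra, comm_ring_1}"
  shows "norm (\<Prod>k\<in>K. f k) \<le> exp (\<Sum>k\<in>K. norm (f k - 1))"
proof -
  have "norm (\<Prod>k\<in>K. f k) = (\<Prod>k\<in>K. norm (1 + (f k - 1)))"
    by (simp add: prod_norm)
  also have "\<dots> \<le> (\<Prod>k\<in>K. 1 + norm (f k - 1))"
  proof (intro prod_mono conjI norm_ge_zero)
    fix k show "norm (1 + (f k - 1)) \<le> 1 + norm (f k - 1)"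
      using norm_triangle_ineq[of 1 "f k - 1"] by simp
  qed
  also have "\<dots> \<le> exp (\<Sum>k\<in>K. norm (f k - 1))"
    by (rule prod_le_exp_sum) auto
  finally show ?thesis .
qed

lemma norm_prod_minus_1_le_exp_sum:
  fixes f :: "nat \<Rightarrow> 'a::{real_normed_div_algebra, comm_ring_1}"
  shows "norm ((\<Prod>k\<in>K. f k) - 1) \<le> exp (\<Sum>k\<in>K. norm (f k - 1)) - 1"
proof -
  have "norm ((\<Prod>k\<in>K. 1 + (f k - 1)) - 1) \<le> (\<Prod>k\<in>K. 1 + norm (f k - 1)) - 1"
    by (rule norm_prod_minus1_le_prod_minus1)
  also have "(\<Prod>k\<in>K. 1 + norm (f k - 1)) \<le> exp (\<Sum>k\<in>K. norm (f k - 1))"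
    by (rule prod_le_exp_sum) auto
  finally show ?thesis by simp
qed

lemma uniformly_convergent_on_prod_Mtest:
  fixes f :: "nat \<Rightarrow> 'a::topological_space \<Rightarrow> 'b::{real_normed_div_algebra, comm_ring_1, banach}"
  assumes bound: "\<And>k x. x \<in> A \<Longrightarrow> norm (f k x - 1) \<le> M k" and "summable M"
  shows "uniformly_convergent_on A (\<lambda>n x. \<Prod>k<n. f k x)"
proof (cases "A = {}")
  case False
  then obtain x0 where "x0 \<in> A" by blast
  then have M_nonneg: "M k \<ge> 0" for k
    using bound[of x0 k] norm_ge_zero order_trans by blast
  have sum_le: "(\<Sum>k\<in>K. norm (f k x - 1)) \<le> (\<Sum>k\<in>K. M k)" if "x \<in> A" for K x
    using bound that by (simp add: sum_mono)
  show ?thesis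
  proof (rule uniformly_convergent_prod_Cauchy)
    fix x m assume "x \<in> A"
    have "norm (\<Prod>k<m. f k x) \<le> exp (\<Sum>k<m. M k)"
      using norm_prod_le_exp_sum[of "\<lambda>k. f k x"] sum_le[OF \<open>x \<in> A\<close>] order_trans by fastforce
    also have "\<dots> \<le> exp (suminf M)"
      using \<open>summable M\<close> M_nonneg by (simp add: sum_le_suminf)
    finally show "norm (\<Prod>k<m. f k x) \<le> exp (suminf M)" .
  next
    fix e :: real assume "e > 0"
    then have "ln (1 + e) > 0" by simp
    from suminf_exist_split[OF this \<open>summable M\<close>] obtain K
      where K: "\<And>m. K \<le> m \<Longrightarrow> norm (\<Sum>i. M (i + m)) < ln (1 + e)" by blast
    have tail: "(\<Sum>k=m..n. M k) < ln (1 + e)" if "K \<le> m" "m \<le> n" for m n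
    proof -
      have "(\<Sum>k=m..n. M k) = (\<Sum>i<Suc (n - m). M (i + m))"
        using that by (intro sum.reindex_bij_witness[of _ "\<lambda>k. k + m" "\<lambda>k. k - m"]) auto
      also have "\<dots> \<le> (\<Sum>i. M (i + m))"
        using \<open>summable M\<close> M_nonneg by (intro sum_le_suminf) (auto simp: summable_iff_shift)
      also have "\<dots> < ln (1 + e)" using K[OF that(1)] by simp
      finally show ?thesis .
    qed
    show "\<exists>K. \<forall>x\<in>A. \<forall>m\<ge>K. \<forall>n\<ge>m. dist (\<Prod>k=m..n. f k x) 1 < e"
    proof (intro exI[of _ K] ballI allI impI)
      fix x m n assume "x \<in> A" "K \<le> m" "m \<le> n"
      have "exp (\<Sum>k=m..n. norm (f k x - 1)) < 1 + e"
        using sum_le[OF \<open>x \<in> A\<close>] tail[OF \<open>K \<le> m\<close> \<open>m \<le> n\<close>] \<open>e > 0\<close>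
        by (metis exp_less_mono exp_ln add_pos_pos zero_less_one order_le_less_trans)
      then show "dist (\<Prod>k=m..n. f k x) 1 < e"
        using norm_prod_minus_1_le_exp_sum[of "\<lambda>k. f k x" "{m..n}"] by (simp add: dist_norm)
    qed
  qed
qed (simp add: uniformly_convergent_on_empty)

lemma partial_prods_tendsto_prodinf:
  fixes f :: "nat \<Rightarrow> 'a::{real_normed_field, banach}"
  assumes "summable (\<lambda>k. norm (f k - 1))"
  shows "f has_prod prodinf f" and "(\<lambda>n. \<Prod>k<n. f k) \<longlonglongrightarrow> prodinf f"
proof -
  have "convergent_prod f"
    using assms by (intro abs_convergent_prod_imp_convergent_prod summable_imp_abs_convergent_prod)
  then show "f has_prod prodinf f" by (rule convergent_prod_has_prod)
  have "(\<lambda>n. \<Prod>k\<le>n. f k) \<longlonglongrightarrow> prodinf f"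
    using \<open>convergent_prod f\<close> by (rule convergent_prod_LIMSEQ)
  then have "(\<lambda>n. \<Prod>k<Suc n. f k) \<longlonglongrightarrow> prodinf f"
    by (simp add: lessThan_Suc_atMost)
  then show "(\<lambda>n. \<Prod>k<n. f k) \<longlonglongrightarrow> prodinf f"
    by (rule LIMSEQ_imp_Suc)
qed

lemma tendsto_infsum_exhausting:
  fixes f :: "'a \<Rightarrow> 'b::banach"
  assumes summable: "(\<lambda>a. norm (f a)) summable_on A"
    and sub: "\<And>x. B x \<subseteq> A"
    and exhausting: "\<And>a. a \<in> A \<Longrightarrow> eventually (\<lambda>x. a \<in> B x) F"
  shows "((\<lambda>x. infsum f (B x)) \<longlongrightarrow> infsum f A) F"
proof (rule tendstoI)
  fix e :: real assume "e > 0"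
  have "((\<lambda>a. norm (f a)) has_sum infsum (\<lambda>a. norm (f a)) A) A"
    using summable by (simp add: summable_iff_has_sum_infsum)
  then have "eventually (\<lambda>S. dist (sum (\<lambda>a. norm (f a)) S) (infsum (\<lambda>a. norm (f a)) A) < e)
      (finite_subsets_at_top A)"
    unfolding has_sum_def using \<open>e > 0\<close> tendstoD by blast
  then obtain S where S: "finite S" "S \<subseteq> A"
    and S_close: "dist (sum (\<lambda>a. norm (f a)) S) (infsum (\<lambda>a. norm (f a)) A) < e"
    unfolding eventually_finite_subsets_at_top by blast
  have "eventually (\<lambda>x. S \<subseteq> B x) F"
    using S by (induction S rule: finite_induct) (auto intro: eventually_conj exhausting)
  then show "eventually (\<lambda>x. dist (infsum f (B x)) (infsum f A) < e) F"
  proof eventually_elim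
    case (elim x)
    have f_summable: "f summable_on A" using summable abs_summable_summable by blast
    have norm_summable: "(\<lambda>a. norm (f a)) summable_on C" if "C \<subseteq> A" for C
      using summable that by (rule summable_on_subset_banach)
    have "dist (infsum f (B x)) (infsum f A) = norm (infsum f (A - B x))"
      using infsum_Diff[OF f_summable summable_on_subset_banach[OF f_summable sub] sub]
      by (simp add: dist_norm norm_minus_commute)
    also have "\<dots> \<le> infsum (\<lambda>a. norm (f a)) (A - B x)"
      by (rule norm_infsum_bound) (use norm_summable in blast)
    also have "\<dots> \<le> infsum (\<lambda>a. norm (f a)) (A - S)"
      using elim by (intro infsum_mono_neutral norm_summable) auto
    also have "\<dots> = infsum (\<lambda>a. norm (f a)) A - sum (\<lambda>a. norm (f a)) S"
      using infsum_Diff[OF summable _ S(2)] S by simp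
    also have "\<dots> < e" using S_close by (simp add: dist_norm)
    finally show ?case .
  qed
qed

lemma has_sum_prod_PiE:
  fixes f :: "'a \<Rightarrow> 'b::countable \<Rightarrow> 'c::{real_normed_field, banach, second_countable_topology}"
  assumes "finite A" and summable: "\<And>x. x \<in> A \<Longrightarrow> (\<lambda>k. norm (f x k)) summable_on B x"
  shows "((\<lambda>g. \<Prod>x\<in>A. f x (g x)) has_sum (\<Prod>x\<in>A. infsum (f x) (B x))) (PiE A B)"
    and "(\<lambda>g. norm (\<Prod>x\<in>A. f x (g x))) summable_on PiE A B"
proof -
  have "Infinite_Set_Sum.abs_summable_on (\<lambda>g. \<Prod>x\<in>A. f x (g x)) (PiE A B)"
    using assms by (intro abs_summable_on_prod_PiE) (auto simp: abs_summable_equivalent[symmetric])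
  then show norm_summable: "(\<lambda>g. norm (\<Prod>x\<in>A. f x (g x))) summable_on PiE A B"
    by (simp add: abs_summable_equivalent[symmetric])
  then have "((\<lambda>g. \<Prod>x\<in>A. f x (g x)) has_sum infsum (\<lambda>g. \<Prod>x\<in>A. f x (g x)) (PiE A B)) (PiE A B)"
    by (rule has_sum_infsum[OF abs_summable_summable])
  moreover have "infsum (\<lambda>g. \<Prod>x\<in>A. f x (g x)) (PiE A B) = (\<Prod>x\<in>A. infsum (f x) (B x))"
    using assms by (intro infsum_prod_PiE_abs) auto
  ultimately show "((\<lambda>g. \<Prod>x\<in>A. f x (g x)) has_sum (\<Prod>x\<in>A. infsum (f x) (B x))) (PiE A B)"
    by simp
qed

section \<open>Chains in the bitwise order\<close>

lemma bit_le_refl [simp]: "bit_le h h"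
  by (simp add: bit_le_def)

lemma bit_le_trans: "bit_le a b \<Longrightarrow> bit_le b c \<Longrightarrow> bit_le a c"
  by (auto simp: bit_le_def)

lemma bit_le_imp_le: "bit_le l h \<Longrightarrow> l \<le> h"
proof (induction h arbitrary: l rule: less_induct)
  case (less h)
  show ?case
  proof (cases "h = 0")
    case True
    have "l = 0"
      by (rule bit_eqI) (use less.prems True in \<open>auto simp: bit_le_def\<close>)
    then show ?thesis by simp
  next
    case False
    have "bit_le (l div 2) (h div 2)"
      using less.prems by (auto simp: bit_le_def bit_Suc[symmetric])
    then have "l div 2 \<le> h div 2" using less.IH[of "h div 2"] False by simp
    moreover have "odd l \<longrightarrow> odd h"
      using less.prems by (auto simp: bit_le_def bit_0[symmetric])
    ultimately show "l \<le> h" by presburger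
  qed
qed

definition bit_chains :: "nat set \<Rightarrow> nat set set" where
  "bit_chains X = {C. C \<subseteq> X \<and> (\<forall>a\<in>C. \<forall>b\<in>C. bit_le a b \<or> bit_le b a)}"

lemma finite_bit_chains: "finite X \<Longrightarrow> finite (bit_chains X)"
  by (rule finite_subset[of _ "Pow X"]) (auto simp: bit_chains_def)

lemma finite_bit_chain: "finite X \<Longrightarrow> C \<in> bit_chains X \<Longrightarrow> finite C"
  by (auto simp: bit_chains_def intro: finite_subset)

lemma bit_chains_empty: "bit_chains {} = {{}}"
  by (auto simp: bit_chains_def)

lemma bit_chains_singleton: "bit_chains {h} = {{}, {h}}"
  by (auto simp: bit_chains_def)

text \<open>For \<open>y h = p powr - s h\<close> this is the Euler factor of \<open>F\<close> at \<open>p\<close>: the Euler factor of \<open>G\<close>,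
  a sum over chains \<open>C\<close> of \<open>\<Prod>h\<in>C. y h / (1 - y h)\<close>, times \<open>\<Prod>h\<in>X. 1 - y h\<close>.\<close>
definition chain_poly :: "nat set \<Rightarrow> (nat \<Rightarrow> 'a::comm_ring_1) \<Rightarrow> 'a" where
  "chain_poly X y = (\<Sum>C\<in>bit_chains X. (\<Prod>h\<in>C. y h) * (\<Prod>h\<in>X - C. 1 - y h))"

lemma chain_poly_cong:
  "(\<And>h. h \<in> X \<Longrightarrow> y h = y' h) \<Longrightarrow> chain_poly X y = chain_poly X y'"
  unfolding chain_poly_def bit_chains_def by (intro sum.cong prod.cong arg_cong2[where f = "(*)"]) auto

lemma continuous_on_chain_poly [continuous_intros]:
  fixes y :: "'b::topological_space \<Rightarrow> nat \<Rightarrow> 'a::real_normed_field"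
  shows "(\<And>h. continuous_on A (\<lambda>x. y x h)) \<Longrightarrow> continuous_on A (\<lambda>x. chain_poly X (y x))"
  unfolding chain_poly_def by (intro continuous_intros)

lemma holomorphic_on_chain_poly [holomorphic_intros]:
  "(\<And>h. (\<lambda>w. y w h) holomorphic_on A) \<Longrightarrow> (\<lambda>w. chain_poly X (y w)) holomorphic_on A"
  unfolding chain_poly_def by (intro holomorphic_intros)

lemma norm_subset_term_le:
  fixes y :: "nat \<Rightarrow> 'a::real_normed_field"
  assumes "finite X" "C \<subseteq> X" "h \<in> C" "l \<in> C" "h \<noteq> l"
    and y: "\<And>h. h \<in> X \<Longrightarrow> norm (y h) \<le> r" and "r \<le> 1"
  shows "norm ((\<Prod>h\<in>C. y h) * (\<Prod>h\<in>X - C. 1 - y h)) \<le> r\<^sup>2 * 2 ^ card X"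
proof -
  have "finite C" using assms(1,2) finite_subset by blast
  have y_C: "norm (y k) \<le> r" if "k \<in> C" for k using y that \<open>C \<subseteq> X\<close> by blast
  then have "0 \<le> r" using \<open>h \<in> C\<close> norm_ge_zero order_trans by blast
  have "norm (\<Prod>h\<in>C. y h) = (\<Prod>k\<in>{h, l}. norm (y k)) * (\<Prod>k\<in>C - {h, l}. norm (y k))"
    using assms(3,4) \<open>finite C\<close>
    by (simp add: prod_norm norm_mult prod.subset_diff[of "{h, l}" C] mult.commute)
  also have "\<dots> = norm (y h) * norm (y l) * (\<Prod>k\<in>C - {h, l}. norm (y k))"
    using \<open>h \<noteq> l\<close> by simp
  also have "\<dots> \<le> r * r * 1"
  proof (rule mult_mono)
    show "norm (y h) * norm (y l) \<le> r * r"
      using y_C assms(3,4) \<open>0 \<le> r\<close> by (intro mult_mono) auto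
    show "(\<Prod>k\<in>C - {h, l}. norm (y k)) \<le> 1"
      using y_C \<open>r \<le> 1\<close> by (intro prod_le_1) (auto intro: order_trans)
  qed (simp_all add: prod_nonneg)
  finally have "norm (\<Prod>h\<in>C. y h) \<le> r\<^sup>2" by (simp add: power2_eq_square)
  moreover have "norm (\<Prod>h\<in>X - C. 1 - y h) \<le> 2 ^ card X"
  proof -
    have "norm (\<Prod>h\<in>X - C. 1 - y h) \<le> (\<Prod>h\<in>X - C. 2)"
      unfolding prod_norm[symmetric]
    proof (intro prod_mono conjI norm_ge_zero)
      fix k assume "k \<in> X - C"
      then show "norm (1 - y k) \<le> 2"
        using y[of k] \<open>r \<le> 1\<close> norm_triangle_ineq4[of 1 "y k"] by simp
    qed
    also have "\<dots> \<le> 2 ^ card X"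
      using \<open>finite X\<close> by (simp add: card_mono power_increasing)
    finally show ?thesis .
  qed
  ultimately show ?thesis
    unfolding norm_mult by (intro mult_mono) simp_all
qed

lemma chain_poly_bound:
  fixes y :: "nat \<Rightarrow> 'a::real_normed_field"
  assumes "finite X" and y: "\<And>h. h \<in> X \<Longrightarrow> norm (y h) \<le> r" and "0 \<le> r" "r \<le> 1"
  shows "norm (chain_poly X y - 1) \<le> 4 ^ card X * r\<^sup>2"
proof -
  let ?t = "\<lambda>C. (\<Prod>h\<in>C. y h) * (\<Prod>h\<in>X - C. 1 - y h)"
  have "(\<Sum>C\<in>Pow X. ?t C) = 1"
    using prod_add[of X y "\<lambda>h. 1 - y h"] \<open>finite X\<close> by simp
  moreover have "(\<Sum>C\<in>Pow X. ?t C) = chain_poly X y + (\<Sum>C\<in>Pow X - bit_chains X. ?t C)"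
    unfolding chain_poly_def using \<open>finite X\<close>
    by (subst sum.subset_diff[of "bit_chains X"]) (auto simp: bit_chains_def)
  ultimately have "chain_poly X y - 1 = - (\<Sum>C\<in>Pow X - bit_chains X. ?t C)"
    by (simp add: algebra_simps)
  then have "norm (chain_poly X y - 1) = norm (\<Sum>C\<in>Pow X - bit_chains X. ?t C)"
    by simp
  also have "\<dots> \<le> (\<Sum>C\<in>Pow X - bit_chains X. r\<^sup>2 * 2 ^ card X)"
  proof (rule sum_norm_le)
    fix C assume C: "C \<in> Pow X - bit_chains X"
    \<comment> \<open>a non-chain contains two incomparable, hence distinct, indices\<close>
    then obtain h l where "h \<in> C" "l \<in> C" "h \<noteq> l"
      by (auto simp: bit_chains_def) (metis bit_le_refl)
    then show "norm (?t C) \<le> r\<^sup>2 * 2 ^ card X"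
      using C assms by (intro norm_subset_term_le) auto
  qed
  also have "\<dots> = card (Pow X - bit_chains X) * (r\<^sup>2 * 2 ^ card X)"
    by simp
  also have "\<dots> \<le> card (Pow X) * (r\<^sup>2 * 2 ^ card X)"
    using \<open>finite X\<close> by (intro mult_right_mono) (auto intro: card_mono)
  also have "\<dots> = 4 ^ card X * r\<^sup>2"
    using \<open>finite X\<close> by (simp add: card_Pow power_mult_distrib[symmetric])
  finally show ?thesis .
qed

lemma chain_poly_eq_sum_times_prod:
  fixes y :: "nat \<Rightarrow> 'a::field"
  assumes "finite X" "\<And>h. h \<in> X \<Longrightarrow> y h \<noteq> 1"
  shows "chain_poly X y = (\<Sum>C\<in>bit_chains X. \<Prod>h\<in>C. y h / (1 - y h)) * (\<Prod>h\<in>X. 1 - y h)"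
  unfolding chain_poly_def sum_distrib_right
proof (rule sum.cong[OF refl])
  fix C assume "C \<in> bit_chains X"
  then have "C \<subseteq> X" by (simp add: bit_chains_def)
  have "(\<Prod>h\<in>X. 1 - y h) = (\<Prod>h\<in>C. 1 - y h) * (\<Prod>h\<in>X - C. 1 - y h)"
    using prod.subset_diff[OF \<open>C \<subseteq> X\<close> \<open>finite X\<close>] by (simp add: mult.commute)
  moreover have "(\<Prod>h\<in>C. y h / (1 - y h)) * (\<Prod>h\<in>C. 1 - y h) = (\<Prod>h\<in>C. y h)"
    unfolding prod.distrib[symmetric] using assms(2) \<open>C \<subseteq> X\<close> by (intro prod.cong) auto
  ultimately show "(\<Prod>h\<in>C. y h) * (\<Prod>h\<in>X - C. 1 - y h) =
      (\<Prod>h\<in>C. y h / (1 - y h)) * (\<Prod>h\<in>X. 1 - y h)"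
    by (simp add: mult.assoc)
qed

section \<open>Continuation of \<open>F\<close> to \<open>Re s > 1/2\<close>\<close>

definition F_factor :: "nat \<Rightarrow> (nat \<Rightarrow> complex) \<Rightarrow> nat \<Rightarrow> complex" where
  "F_factor N s p = (if prime p then chain_poly {1..N} (\<lambda>h. of_nat p powr (- s h)) else 1)"

definition F_prod :: "nat \<Rightarrow> (nat \<Rightarrow> complex) \<Rightarrow> complex" where
  "F_prod N s = lim (\<lambda>m. \<Prod>p<m. F_factor N s p)"

lemma norm_powr_of_nat: "norm ((of_nat p :: complex) powr z) = real p powr Re z"
  by (subst norm_powr_real_powr) auto

lemma F_factor_bound:
  assumes "\<sigma> > 0" and s: "\<And>h. h \<in> {1..N} \<Longrightarrow> Re (s h) \<ge> \<sigma>"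
  shows "norm (F_factor N s p - 1) \<le> 4 ^ N * real p powr (- 2 * \<sigma>)"
proof (cases "prime p")
  case True
  then have "real p \<ge> 2" using prime_ge_2_nat by auto
  let ?r = "real p powr (- \<sigma>)"
  have "?r \<le> 1"
    using \<open>real p \<ge> 2\<close> \<open>\<sigma> > 0\<close> by (simp add: powr_minus ge_one_powr_ge_zero inverse_le_1_iff)
  have "norm (chain_poly {1..N} (\<lambda>h. of_nat p powr (- s h)) - 1) \<le> 4 ^ card {1..N} * ?r\<^sup>2"
    using s \<open>real p \<ge> 2\<close> \<open>?r \<le> 1\<close> by (intro chain_poly_bound) (auto simp: norm_powr_of_nat)
  also have "?r\<^sup>2 = real p powr (- 2 * \<sigma>)"
    using \<open>real p \<ge> 2\<close> by (simp add: power2_eq_square powr_add[symmetric])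
  finally show ?thesis using True by (simp add: F_factor_def)
qed (simp add: F_factor_def)

lemma uniform_limit_F_prod:
  fixes A :: "'a::topological_space set"
  assumes "\<sigma> > 1/2" and "\<And>x h. x \<in> A \<Longrightarrow> h \<in> {1..N} \<Longrightarrow> Re (g x h) \<ge> \<sigma>"
  shows "uniform_limit A (\<lambda>m x. \<Prod>p<m. F_factor N (g x) p) (\<lambda>x. F_prod N (g x)) sequentially"
proof -
  have "summable (\<lambda>p. 4 ^ N * real p powr (- 2 * \<sigma>))"
    using assms(1) by (intro summable_mult) (simp add: summable_real_powr_iff)
  then have "uniformly_convergent_on A (\<lambda>m x. \<Prod>p<m. F_factor N (g x) p)"
  proof (rule uniformly_convergent_on_prod_Mtest[rotated])
    fix p x assume "x \<in> A"
    then show "norm (F_factor N (g x) p - 1) \<le> 4 ^ N * real p powr (- 2 * \<sigma>)"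
      using assms by (intro F_factor_bound) auto
  qed
  then show ?thesis unfolding F_prod_def uniformly_convergent_uniform_limit_iff .
qed

lemma continuous_on_F_factor: "continuous_on A (\<lambda>s. F_factor N s p)"
proof (cases "prime p")
  case True
  then have "continuous_on A (\<lambda>s. chain_poly {1..N} (\<lambda>h. of_nat p powr (- s h)))"
    by (intro continuous_intros continuous_on_subset[OF continuous_on_product_coordinates]) auto
  then show ?thesis using True by (simp add: F_factor_def)
qed (simp add: F_factor_def)

lemma holomorphic_on_F_factor_coordinate: "(\<lambda>w. F_factor N (s(h := w)) p) holomorphic_on A"
proof (cases "prime p")
  case True
  have "(\<lambda>w. (s(h := w)) l) holomorphic_on A" for l
    by (cases "l = h") auto
  then have "(\<lambda>w. chain_poly {1..N} (\<lambda>l. of_nat p powr (- (s(h := w)) l))) holomorphic_on A"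
    by (intro holomorphic_intros)
  then show ?thesis using True by (simp add: F_factor_def)
qed (simp add: F_factor_def)

lemma finite_set_gap:
  fixes S :: "real set"
  assumes "finite S" "\<forall>x\<in>S. a < x"
  obtains \<sigma> where "a < \<sigma>" "\<forall>x\<in>S. \<sigma> < x"
proof
  let ?m = "Min (insert (a + 1) S)"
  have "a < ?m" using assms by simp
  then show "a < (a + ?m) / 2" by simp
  show "\<forall>x\<in>S. (a + ?m) / 2 < x"
  proof
    fix x assume "x \<in> S"
    then have "?m \<le> x" using assms(1) by simp
    then show "(a + ?m) / 2 < x" using \<open>a < ?m\<close> by (simp add: field_simps)
  qed
qed

lemma continuous_on_F_prod: "continuous_on (half_region N (1/2)) (F_prod N)"
proof (rule continuous_at_imp_continuous_on, rule ballI)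
  fix s0 assume "s0 \<in> half_region N (1/2)"
  then obtain \<sigma> where \<sigma>: "\<sigma> > 1/2" "\<forall>h\<in>{1..N}. \<sigma> < Re (s0 h)"
    using finite_set_gap[of "(\<lambda>h. Re (s0 h)) ` {1..N}" "1/2"] by (auto simp: half_region_def)
  define U where "U = (\<Inter>h\<in>{1..N}. {s. \<sigma> < Re (s h)})"
  have "open U" unfolding U_def
    by (intro open_INT ballI finite_atLeastAtMost open_Collect_less continuous_intros
          continuous_on_compose2[OF continuous_on_Re continuous_on_product_coordinates]) auto
  moreover have "s0 \<in> U" unfolding U_def using \<sigma> by blast
  moreover have "continuous_on U (F_prod N)"
  proof (rule uniform_limit_theorem)
    show "uniform_limit U (\<lambda>m s. \<Prod>p<m. F_factor N s p) (F_prod N) sequentially"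
      using \<sigma>(1) by (rule uniform_limit_F_prod) (auto simp: U_def less_imp_le)
  qed (auto intro!: always_eventually continuous_on_prod continuous_on_F_factor)
  ultimately show "isCont (F_prod N) s0"
    using continuous_on_eq_continuous_at by blast
qed

lemma holomorphic_on_F_prod_coordinate:
  assumes "s \<in> half_region N (1/2)"
  shows "(\<lambda>w. F_prod N (s(h := w))) holomorphic_on {w. 1/2 < Re w}"
proof (rule holomorphic_uniform_sequence)
  show "(\<lambda>w. \<Prod>p<m. F_factor N (s(h := w)) p) holomorphic_on {w. 1/2 < Re w}" for m
    by (intro holomorphic_on_prod holomorphic_on_F_factor_coordinate)
  fix w0 assume "w0 \<in> {w. 1/2 < Re w}"
  then have "\<forall>x\<in>insert (Re w0) ((\<lambda>l. Re (s l)) ` {1..N}). 1/2 < x"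
    using assms by (auto simp: half_region_def)
  moreover have "finite (insert (Re w0) ((\<lambda>l. Re (s l)) ` {1..N}))" by simp
  ultimately obtain \<sigma>
    where "\<sigma> > 1/2" "\<forall>x\<in>insert (Re w0) ((\<lambda>l. Re (s l)) ` {1..N}). \<sigma> < x"
    using finite_set_gap by metis
  then have \<sigma>: "\<sigma> > 1/2" "\<sigma> < Re w0" "\<forall>l\<in>{1..N}. \<sigma> < Re (s l)"
    by auto
  define d where "d = (Re w0 - \<sigma>) / 2"
  have Re_ball: "\<sigma> < Re w" if "w \<in> cball w0 d" for w
  proof -
    have "Re w0 - Re w \<le> dist w0 w"
      using complex_Re_le_cmod[of "w0 - w"] by (simp add: dist_norm)
    then show ?thesis using that \<sigma>(2) by (simp add: d_def)
  qed
  show "\<exists>d>0. cball w0 d \<subseteq> {w. 1/2 < Re w} \<and> uniform_limit (cball w0 d)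
          (\<lambda>m w. \<Prod>p<m. F_factor N (s(h := w)) p) (\<lambda>w. F_prod N (s(h := w))) sequentially"
  proof (intro exI[of _ d] conjI subsetI)
    show "d > 0" using \<sigma>(2) by (simp add: d_def)
    show "w \<in> {w. 1/2 < Re w}" if "w \<in> cball w0 d" for w
      using Re_ball[OF that] \<sigma>(1) by simp
    show "uniform_limit (cball w0 d)
        (\<lambda>m w. \<Prod>p<m. F_factor N (s(h := w)) p) (\<lambda>w. F_prod N (s(h := w))) sequentially"
      using \<sigma>(1) by (rule uniform_limit_F_prod) (use Re_ball \<sigma>(3) in \<open>auto simp: less_imp_le\<close>)
  qed
qed (rule open_halfspace_Re_gt)

lemma multi_holomorphic_F_prod: "multi_holomorphic_on N (F_prod N) (1/2)"
  unfolding multi_holomorphic_on_def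
  using continuous_on_F_prod holomorphic_on_F_prod_coordinate by blast

section \<open>Euler products for \<open>G\<close> and \<open>\<zeta>\<close> when \<open>Re s > 1\<close>\<close>

definition support_exactly :: "nat set \<Rightarrow> (nat \<Rightarrow> nat) set" where
  "support_exactly C = {a. (\<forall>h\<in>C. a h \<ge> 1) \<and> (\<forall>h. h \<notin> C \<longrightarrow> a h = 0)}"

definition chain_exponents :: "nat set \<Rightarrow> (nat \<Rightarrow> nat) set" where
  "chain_exponents X = {a. {h. 0 < a h} \<in> bit_chains X}"

lemma bij_betw_support_exactly:
  "bij_betw (\<lambda>f h. if h \<in> C then f h else 0) (PiE C (\<lambda>_. {1..})) (support_exactly C)"
  by (rule bij_betw_byWitness[of _ "\<lambda>a. restrict a C"])
     (auto simp: support_exactly_def PiE_def extensional_def fun_eq_iff)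

lemma chain_exponents_eq_Union: "chain_exponents X = (\<Union>C\<in>bit_chains X. support_exactly C)"
proof -
  have "a \<in> support_exactly C \<longleftrightarrow> {h. 0 < a h} = C" for a C
    by (auto simp: support_exactly_def)
  then show ?thesis by (auto simp: chain_exponents_def)
qed

lemma support_exactly_disjoint: "C \<noteq> D \<Longrightarrow> support_exactly C \<inter> support_exactly D = {}"
  by (auto simp: support_exactly_def)

lemma has_sum_support_exactly:
  fixes y :: "nat \<Rightarrow> complex"
  assumes "finite X" "C \<subseteq> X" and y: "\<And>h. h \<in> C \<Longrightarrow> norm (y h) < 1"
  shows "((\<lambda>a. \<Prod>h\<in>X. y h ^ a h) has_sum (\<Prod>h\<in>C. y h / (1 - y h))) (support_exactly C)"
    and "(\<lambda>a. norm (\<Prod>h\<in>X. y h ^ a h)) summable_on support_exactly C"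
proof -
  have "finite C" using assms(1,2) finite_subset by blast
  let ?ext = "\<lambda>f h. if h \<in> C then f h else (0::nat)"
  have ext: "(\<Prod>h\<in>X. y h ^ ?ext f h) = (\<Prod>h\<in>C. y h ^ f h)" for f
  proof -
    have "(\<Prod>h\<in>X. y h ^ ?ext f h) = (\<Prod>h\<in>C. y h ^ ?ext f h)"
      using assms(1,2) by (intro prod.mono_neutral_right) auto
    then show ?thesis by simp
  qed
  have geometric: "((\<lambda>k. y h ^ k) has_sum (y h / (1 - y h))) {1..}" if "h \<in> C" for h
    using y[OF that] by (rule has_sum_geometric_from_1)
  have "(\<lambda>k. norm (y h) ^ k) summable_on {1..}" if "h \<in> C" for h
    using has_sum_geometric_from_1[of "norm (y h)"] y[OF that] by (auto simp: summable_on_def)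
  then have "((\<lambda>f. \<Prod>h\<in>C. y h ^ f h) has_sum (\<Prod>h\<in>C. infsum (\<lambda>k. y h ^ k) {1..})) (PiE C (\<lambda>_. {1..}))"
    and "(\<lambda>f. norm (\<Prod>h\<in>C. y h ^ f h)) summable_on PiE C (\<lambda>_. {1..})"
    using has_sum_prod_PiE[OF \<open>finite C\<close>, of "\<lambda>h k. y h ^ k" "\<lambda>_. {1..}"] by (auto simp: norm_power)
  moreover have "(\<Prod>h\<in>C. infsum (\<lambda>k. y h ^ k) {1..}) = (\<Prod>h\<in>C. y h / (1 - y h))"
    using geometric by (intro prod.cong refl) (simp add: infsumI)
  ultimately show "((\<lambda>a. \<Prod>h\<in>X. y h ^ a h) has_sum (\<Prod>h\<in>C. y h / (1 - y h))) (support_exactly C)"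
    and "(\<lambda>a. norm (\<Prod>h\<in>X. y h ^ a h)) summable_on support_exactly C"
    using has_sum_reindex_bij_betw[OF bij_betw_support_exactly[of C], of "\<lambda>a. \<Prod>h\<in>X. y h ^ a h"]
      summable_on_reindex_bij_betw[OF bij_betw_support_exactly[of C], of "\<lambda>a. norm (\<Prod>h\<in>X. y h ^ a h)"]
    by (simp_all add: ext)
qed

lemma has_sum_chain_exponents:
  fixes y :: "nat \<Rightarrow> complex"
  assumes "finite X" and y: "\<And>h. h \<in> X \<Longrightarrow> norm (y h) < 1"
  shows "((\<lambda>a. \<Prod>h\<in>X. y h ^ a h) has_sum (\<Sum>C\<in>bit_chains X. \<Prod>h\<in>C. y h / (1 - y h)))
           (chain_exponents X)"
    and "(\<lambda>a. norm (\<Prod>h\<in>X. y h ^ a h)) summable_on chain_exponents X"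
proof -
  have local: "((\<lambda>a. \<Prod>h\<in>X. y h ^ a h) has_sum (\<Prod>h\<in>C. y h / (1 - y h))) (support_exactly C)"
    "(\<lambda>a. norm (\<Prod>h\<in>X. y h ^ a h)) summable_on support_exactly C"
    if "C \<in> bit_chains X" for C
    using that y by (intro has_sum_support_exactly \<open>finite X\<close>; force simp: bit_chains_def)+
  show "((\<lambda>a. \<Prod>h\<in>X. y h ^ a h) has_sum (\<Sum>C\<in>bit_chains X. \<Prod>h\<in>C. y h / (1 - y h)))
           (chain_exponents X)"
    unfolding chain_exponents_eq_Union
    by (rule sum_has_sum[OF finite_bit_chains[OF \<open>finite X\<close>]])
       (simp_all add: local support_exactly_disjoint)
  show "(\<lambda>a. norm (\<Prod>h\<in>X. y h ^ a h)) summable_on chain_exponents X"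
    unfolding chain_exponents_eq_Union
    by (rule summable_on_finite_union_disjoint[OF finite_bit_chains[OF \<open>finite X\<close>]])
       (simp_all add: local support_exactly_disjoint)
qed

definition G_term :: "nat \<Rightarrow> (nat \<Rightarrow> complex) \<Rightarrow> (nat \<Rightarrow> nat) \<Rightarrow> complex" where
  "G_term N s z = (\<Prod>h\<in>{1..N}. of_nat (z h) powr (- s h))"

definition G_factor :: "nat \<Rightarrow> (nat \<Rightarrow> complex) \<Rightarrow> nat \<Rightarrow> complex" where
  "G_factor N s p =
     (\<Sum>C\<in>bit_chains {1..N}. \<Prod>h\<in>C. of_nat p powr (- s h) / (1 - of_nat p powr (- s h)))"

lemma norm_powr_of_prime_less_1:
  assumes "prime p" "Re w > 0"
  shows "norm ((of_nat p :: complex) powr (- w)) < 1"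
proof -
  have "real p > 1" using assms(1) prime_gt_1_nat by auto
  then show ?thesis using assms(2) by (simp add: norm_powr_of_nat powr_less_one)
qed

lemma has_sum_G_factor:
  assumes "prime p" "\<And>h. h \<in> {1..N} \<Longrightarrow> Re (s h) > 0"
  shows "((\<lambda>a. \<Prod>h\<in>{1..N}. (of_nat p powr (- s h)) ^ a h) has_sum G_factor N s p)
           (chain_exponents {1..N})"
    and "(\<lambda>a. norm (\<Prod>h\<in>{1..N}. (of_nat p powr (- s h)) ^ a h)) summable_on chain_exponents {1..N}"
  unfolding G_factor_def
  using has_sum_chain_exponents[of "{1..N}" "\<lambda>h. of_nat p powr (- s h)"]
    norm_powr_of_prime_less_1 assms by auto

definition primes_below :: "nat \<Rightarrow> nat set" where
  "primes_below x = {p. prime p \<and> p < x}"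

definition smooth_reduced_tuples :: "nat \<Rightarrow> nat \<Rightarrow> (nat \<Rightarrow> nat) set" where
  "smooth_reduced_tuples N x =
     {z \<in> reduced_tuples N. \<forall>h\<in>{1..N}. \<forall>q. prime q \<longrightarrow> q dvd z h \<longrightarrow> q < x}"

definition tuple_of_exponents :: "nat \<Rightarrow> nat set \<Rightarrow> (nat \<Rightarrow> nat \<Rightarrow> nat) \<Rightarrow> nat \<Rightarrow> nat" where
  "tuple_of_exponents N P \<alpha> = (\<lambda>h. if h \<in> {1..N} then \<Prod>p\<in>P. p ^ \<alpha> p h else 0)"

definition exponents_of_tuple :: "nat \<Rightarrow> nat set \<Rightarrow> (nat \<Rightarrow> nat) \<Rightarrow> nat \<Rightarrow> nat \<Rightarrow> nat" where
  "exponents_of_tuple N P z = (\<lambda>p\<in>P. \<lambda>h. if h \<in> {1..N} then multiplicity p (z h) else 0)"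

lemma finite_primes_below: "finite (primes_below x)"
  by (auto simp: primes_below_def)

lemma prime_dvd_prod_prime_powers:
  fixes q :: nat
  assumes "finite P" "\<forall>p\<in>P. prime p" "prime q" "q dvd (\<Prod>p\<in>P. p ^ e p)"
  shows "q \<in> P \<and> e q > 0"
proof -
  have "(\<Prod>p\<in>P. p ^ e p) > 0"
    using assms(2) by (intro prod_pos) (auto simp: prime_gt_0_nat)
  then have "0 < multiplicity q (\<Prod>p\<in>P. p ^ e p)"
    using assms by (subst prime_multiplicity_gt_zero_iff) auto
  then show ?thesis
    using assms(1-3) by (subst (asm) multiplicity_prod_prime_powers) (auto split: if_splits)
qed

lemma prod_multiplicity_eq:
  fixes z :: nat
  assumes "finite P" "z > 0" "\<forall>p\<in>P. prime p" "\<And>q. prime q \<Longrightarrow> q dvd z \<Longrightarrow> q \<in> P"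
  shows "(\<Prod>p\<in>P. p ^ multiplicity p z) = z"
proof -
  have "prime_factors z \<subseteq> P" using assms(4) by (auto simp: prime_factors_dvd)
  then have "(\<Prod>p\<in>P. p ^ multiplicity p z) = (\<Prod>p\<in>prime_factors z. p ^ multiplicity p z)"
    using assms(1,3) by (intro prod.mono_neutral_right) (auto simp: prime_factors_multiplicity)
  also have "\<dots> = z" using prime_factorization_nat[OF \<open>z > 0\<close>] by simp
  finally show ?thesis .
qed

lemma exponents_of_tuple_of_exponents:
  assumes "\<alpha> \<in> PiE (primes_below x) (\<lambda>_. chain_exponents {1..N})"
  shows "exponents_of_tuple N (primes_below x) (tuple_of_exponents N (primes_below x) \<alpha>) = \<alpha>"
proof (rule ext)
  fix p
  show "exponents_of_tuple N (primes_below x) (tuple_of_exponents N (primes_below x) \<alpha>) p = \<alpha> p"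
  proof (cases "p \<in> primes_below x")
    case True
    have "\<alpha> p \<in> chain_exponents {1..N}" using assms True by auto
    then have "\<alpha> p h = 0" if "h \<notin> {1..N}" for h
      using that by (auto simp: chain_exponents_def bit_chains_def)
    moreover have "multiplicity p (\<Prod>q\<in>primes_below x. q ^ \<alpha> q h) = \<alpha> p h" for h
      using True
      by (subst multiplicity_prod_prime_powers) (auto simp: finite_primes_below primes_below_def)
    ultimately show ?thesis
      using True by (auto simp: exponents_of_tuple_def tuple_of_exponents_def fun_eq_iff)
  qed (use assms in \<open>auto simp: exponents_of_tuple_def\<close>)
qed

lemma tuple_of_exponents_of_tuple:
  assumes z: "z \<in> smooth_reduced_tuples N x"
  shows "tuple_of_exponents N (primes_below x) (exponents_of_tuple N (primes_below x) z) = z"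
proof (rule ext)
  fix h
  show "tuple_of_exponents N (primes_below x) (exponents_of_tuple N (primes_below x) z) h = z h"
  proof (cases "h \<in> {1..N}")
    case True
    then have "z h > 0" "\<forall>q. prime q \<longrightarrow> q dvd z h \<longrightarrow> q < x"
      using z by (auto simp: smooth_reduced_tuples_def reduced_tuples_def Suc_le_eq)
    then have "(\<Prod>p\<in>primes_below x. p ^ multiplicity p (z h)) = z h"
      by (intro prod_multiplicity_eq finite_primes_below) (auto simp: primes_below_def)
    then show ?thesis
      using True by (simp add: tuple_of_exponents_def exponents_of_tuple_def)
  qed (use z in \<open>auto simp: tuple_of_exponents_def smooth_reduced_tuples_def reduced_tuples_def\<close>)
qed

lemma tuple_of_exponents_smooth:
  assumes \<alpha>: "\<alpha> \<in> PiE (primes_below x) (\<lambda>_. chain_exponents {1..N})"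
  shows "tuple_of_exponents N (primes_below x) \<alpha> \<in> smooth_reduced_tuples N x"
proof -
  let ?z = "tuple_of_exponents N (primes_below x) \<alpha>"
  have primes: "\<forall>p\<in>primes_below x. prime p" by (simp add: primes_below_def)
  have dvd: "q \<in> primes_below x \<and> \<alpha> q h > 0" if "prime q" "h \<in> {1..N}" "q dvd ?z h" for q h
    using prime_dvd_prod_prime_powers[OF finite_primes_below primes, of q "\<lambda>p. \<alpha> p h"] that
    by (simp add: tuple_of_exponents_def)
  have "coprime (?z h) (?z l)"
    if "h \<in> {1..N}" "l \<in> {1..N}" "\<not> bit_le h l" "\<not> bit_le l h" for h l
  proof (rule ccontr)
    assume "\<not> coprime (?z h) (?z l)"
    then obtain q where "prime q" "q dvd ?z h" "q dvd ?z l"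
      using prime_factor_nat[of "gcd (?z h) (?z l)"] by (auto simp: coprime_iff_gcd_eq_1)
    \<comment> \<open>both \<open>h\<close> and \<open>l\<close> then lie in the support of \<open>\<alpha> q\<close>, which is a chain\<close>
    with dvd that(1,2) have "q \<in> primes_below x" "\<alpha> q h > 0" "\<alpha> q l > 0" by blast+
    then show False
      using \<alpha> that(3,4) by (auto simp: chain_exponents_def bit_chains_def)
  qed
  moreover have "?z h \<ge> 1" if "h \<in> {1..N}" for h
    using that primes by (simp add: tuple_of_exponents_def Suc_le_eq prod_pos prime_gt_0_nat)
  ultimately show ?thesis
    using dvd by (auto simp: smooth_reduced_tuples_def reduced_tuples_def primes_below_def
        tuple_of_exponents_def)
qed

lemma exponents_of_tuple_chain:
  assumes z: "z \<in> smooth_reduced_tuples N x"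
  shows "exponents_of_tuple N (primes_below x) z \<in> PiE (primes_below x) (\<lambda>_. chain_exponents {1..N})"
proof -
  have "(\<lambda>h. if h \<in> {1..N} then multiplicity p (z h) else 0) \<in> chain_exponents {1..N}"
    if "prime p" for p
  proof -
    have "bit_le h l \<or> bit_le l h"
      if "h \<in> {1..N}" "l \<in> {1..N}" "multiplicity p (z h) > 0" "multiplicity p (z l) > 0" for h l
    proof (rule ccontr)
      assume "\<not> (bit_le h l \<or> bit_le l h)"
      then have "coprime (z h) (z l)"
        using z that(1,2) by (auto simp: smooth_reduced_tuples_def reduced_tuples_def)
      moreover have "p dvd z k" if "multiplicity p (z k) > 0" for k
        using that not_dvd_imp_multiplicity_0[of p "z k"] by (cases "p dvd z k") auto
      then have "p dvd z h" "p dvd z l" using that(3,4) by blast+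
      ultimately show False
        using \<open>prime p\<close> coprime_common_divisor_nat by (metis not_prime_1)
    qed
    then show ?thesis by (auto simp: chain_exponents_def bit_chains_def split: if_splits)
  qed
  then show ?thesis
    by (auto simp: exponents_of_tuple_def primes_below_def)
qed

lemma bij_betw_tuple_of_exponents:
  "bij_betw (tuple_of_exponents N (primes_below x))
     (PiE (primes_below x) (\<lambda>_. chain_exponents {1..N})) (smooth_reduced_tuples N x)"
proof (rule bij_betw_byWitness[of _ "exponents_of_tuple N (primes_below x)"])
  show "tuple_of_exponents N (primes_below x) ` PiE (primes_below x) (\<lambda>_. chain_exponents {1..N})
      \<subseteq> smooth_reduced_tuples N x"
    by (rule image_subsetI) (rule tuple_of_exponents_smooth)
  show "exponents_of_tuple N (primes_below x) ` smooth_reduced_tuples N x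
      \<subseteq> PiE (primes_below x) (\<lambda>_. chain_exponents {1..N})"
    by (rule image_subsetI) (rule exponents_of_tuple_chain)
qed (simp_all add: exponents_of_tuple_of_exponents tuple_of_exponents_of_tuple)

lemma powr_of_nat_times: "(of_nat a * y :: complex) powr w = of_nat a powr w * y powr w"
  by (rule powr_times_real_left) auto

lemma powr_of_nat_power: "(of_nat a ^ e :: complex) powr w = (of_nat a powr w) ^ e"
  by (induction e) (simp_all add: powr_of_nat_times)

lemma powr_of_nat_power_times:
  "(of_nat a ^ e * y :: complex) powr w = (of_nat a powr w) ^ e * y powr w"
proof -
  have "(of_nat a ^ e :: complex) = of_real (real (a ^ e))" by simp
  then have "(of_nat a ^ e * y) powr w = (of_nat a ^ e) powr w * y powr w"
    by (metis powr_times_real_left Reals_of_real Re_complex_of_real of_nat_0_le_iff)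
  then show ?thesis by (simp add: powr_of_nat_power)
qed

lemma powr_prod_of_nat_power:
  "finite P \<Longrightarrow> (\<Prod>p\<in>P. of_nat (f p) ^ e p :: complex) powr w = (\<Prod>p\<in>P. (of_nat (f p) powr w) ^ e p)"
  by (induction P rule: finite_induct) (simp_all add: powr_of_nat_power_times)

lemma G_term_tuple_of_exponents:
  assumes "finite P"
  shows "G_term N s (tuple_of_exponents N P \<alpha>) =
           (\<Prod>p\<in>P. \<Prod>h\<in>{1..N}. (of_nat p powr (- s h)) ^ \<alpha> p h)"
proof -
  have "G_term N s (tuple_of_exponents N P \<alpha>) = (\<Prod>h\<in>{1..N}. \<Prod>p\<in>P. (of_nat p powr (- s h)) ^ \<alpha> p h)"
    unfolding G_term_def tuple_of_exponents_def using assms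
    by (intro prod.cong) (simp_all add: powr_prod_of_nat_power)
  then show ?thesis by (simp add: prod.swap[of _ P])
qed

lemma infsum_smooth_reduced_tuples:
  assumes "\<And>h. h \<in> {1..N} \<Longrightarrow> Re (s h) > 0"
  shows "infsum (G_term N s) (smooth_reduced_tuples N x) = (\<Prod>p\<in>primes_below x. G_factor N s p)"
proof -
  have "infsum (G_term N s) (smooth_reduced_tuples N x) =
      infsum (\<lambda>\<alpha>. \<Prod>p\<in>primes_below x. \<Prod>h\<in>{1..N}. (of_nat p powr (- s h)) ^ \<alpha> p h)
        (PiE (primes_below x) (\<lambda>_. chain_exponents {1..N}))"
    using infsum_reindex_bij_betw[OF bij_betw_tuple_of_exponents[of N x], of "G_term N s"]
    by (simp add: G_term_tuple_of_exponents finite_primes_below)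
  also have "\<dots> = (\<Prod>p\<in>primes_below x.
      infsum (\<lambda>a. \<Prod>h\<in>{1..N}. (of_nat p powr (- s h)) ^ a h) (chain_exponents {1..N}))"
    by (rule infsum_prod_PiE_abs[OF finite_primes_below])
       (use has_sum_G_factor(2) assms in \<open>auto simp: primes_below_def\<close>)
  also have "\<dots> = (\<Prod>p\<in>primes_below x. G_factor N s p)"
    using has_sum_G_factor(1) assms by (intro prod.cong refl infsumI) (auto simp: primes_below_def)
  finally show ?thesis .
qed

lemma summable_on_norm_G_term:
  assumes s: "\<And>h. h \<in> {1..N} \<Longrightarrow> Re (s h) > 1"
  shows "(\<lambda>z. norm (G_term N s z)) summable_on reduced_tuples N"
proof -
  have "(\<lambda>k. norm ((of_nat k :: complex) powr (- s h))) summable_on {1..}" if "h \<in> {1..N}" for h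
  proof -
    have "summable (\<lambda>k. real k powr (- Re (s h)))"
      using s[OF that] by (simp add: summable_real_powr_iff)
    then have "(\<lambda>k. real k powr (- Re (s h))) summable_on UNIV"
      by (rule summable_nonneg_imp_summable_on) simp
    then have "(\<lambda>k. real k powr (- Re (s h))) summable_on {1..}"
      by (rule summable_on_subset_banach) simp
    then show ?thesis
      by (simp add: norm_powr_of_nat)
  qed
  then have "(\<lambda>f. norm (\<Prod>h\<in>{1..N}. (of_nat (f h) :: complex) powr (- s h)))
      summable_on PiE {1..N} (\<lambda>_. {1..})"
    by (intro has_sum_prod_PiE(2)) auto
  moreover have "G_term N s (\<lambda>h. if h \<in> {1..N} then f h else 0) =
      (\<Prod>h\<in>{1..N}. of_nat (f h) powr (- s h))" for f
    unfolding G_term_def by (intro prod.cong) auto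
  ultimately have "(\<lambda>z. norm (G_term N s z)) summable_on support_exactly {1..N}"
    using summable_on_reindex_bij_betw[OF bij_betw_support_exactly[of "{1..N}"],
        of "\<lambda>z. norm (G_term N s z)"]
    by (simp add: o_def)
  moreover have "reduced_tuples N \<subseteq> support_exactly {1..N}"
    by (auto simp: support_exactly_def reduced_tuples_def)
  ultimately show ?thesis by (rule summable_on_subset_banach)
qed

lemma tendsto_G_series:
  assumes s: "\<And>h. h \<in> {1..N} \<Longrightarrow> Re (s h) > 1"
  shows "(\<lambda>x. \<Prod>p\<in>primes_below x. G_factor N s p) \<longlonglongrightarrow> G_series N s"
proof -
  have "(\<lambda>x. infsum (G_term N s) (smooth_reduced_tuples N x)) \<longlonglongrightarrow> infsum (G_term N s) (reduced_tuples N)"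
  proof (rule tendsto_infsum_exhausting[OF summable_on_norm_G_term[OF s]])
    show "smooth_reduced_tuples N x \<subseteq> reduced_tuples N" for x
      by (auto simp: smooth_reduced_tuples_def)
    fix z assume z: "z \<in> reduced_tuples N"
    have "q \<le> (\<Sum>h\<in>{1..N}. z h)" if "h \<in> {1..N}" "prime q" "q dvd z h" for h q
    proof -
      have "z h \<ge> 1" using z that(1) by (simp add: reduced_tuples_def)
      then have "q \<le> z h" using that(3) by (simp add: dvd_imp_le)
      also have "z h \<le> (\<Sum>h\<in>{1..N}. z h)" using that(1) by (intro member_le_sum) auto
      finally show ?thesis .
    qed
    note bound = this
    show "eventually (\<lambda>x. z \<in> smooth_reduced_tuples N x) sequentially"
      using eventually_gt_at_top[of "\<Sum>h\<in>{1..N}. z h"]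
    proof eventually_elim
      case (elim x)
      then have "\<forall>h\<in>{1..N}. \<forall>q. prime q \<longrightarrow> q dvd z h \<longrightarrow> q < x"
        using bound le_less_trans by blast
      then show ?case using z by (simp add: smooth_reduced_tuples_def)
    qed
  qed
  moreover have "infsum (G_term N s) (smooth_reduced_tuples N x) = (\<Prod>p\<in>primes_below x. G_factor N s p)"
    for x using s by (intro infsum_smooth_reduced_tuples) force
  moreover have "G_series N s = infsum (G_term N s) (reduced_tuples N)"
    unfolding G_series_def G_term_def ..
  ultimately show ?thesis by simp
qed

text \<open>The case \<open>N = 1\<close> of the Euler product of \<open>G\<close>: all 1-tuples are reduced.\<close>
lemma zeta_Euler_product:
  assumes w: "Re w > 1"
  shows "(\<lambda>x. \<Prod>p\<in>primes_below x. 1 / (1 - of_nat p powr (- w))) \<longlonglongrightarrow> zeta_series w"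
proof -
  have "G_factor 1 (\<lambda>_. w) p = 1 / (1 - of_nat p powr (- w))" if "p \<in> primes_below x" for p x
  proof -
    have "of_nat p powr (- w) \<noteq> (1::complex)"
      using norm_powr_of_prime_less_1[of p w] that w by (auto simp: primes_below_def)
    then show ?thesis
      by (simp add: G_factor_def bit_chains_singleton field_simps)
  qed
  moreover have "G_series 1 (\<lambda>_. w) = zeta_series w"
  proof -
    have "bij_betw (\<lambda>m h. if h = 1 then m else 0) {1..} (reduced_tuples 1)"
      by (rule bij_betw_byWitness[of _ "\<lambda>z. z 1"])
         (auto simp: reduced_tuples_def fun_eq_iff)
    from infsum_reindex_bij_betw[OF this, of "\<lambda>z. of_nat (z 1) powr (- w)"]
    show ?thesis by (simp add: G_series_def zeta_series_def)
  qed
  ultimately show ?thesis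
    using tendsto_G_series[of 1 "\<lambda>_. w"] w by (simp cong: prod.cong)
qed

lemma prod_lessThan_if_prime: "(\<Prod>k<n. if prime k then f k else 1) = (\<Prod>p\<in>primes_below n. f p)"
proof -
  have "(\<Prod>k<n. if prime k then f k else 1) = (\<Prod>k\<in>{k\<in>{..<n}. prime k}. f k)"
    by (rule prod.inter_filter[symmetric]) simp
  also have "{k\<in>{..<n}. prime k} = primes_below n" by (auto simp: primes_below_def)
  finally show ?thesis .
qed

lemma inverse_zeta_Euler_product:
  assumes w: "Re w > 1"
  shows "(\<lambda>x. \<Prod>p\<in>primes_below x. 1 - of_nat p powr (- w)) \<longlonglongrightarrow> inverse (zeta_series w)"
proof -
  define f where "f k = (if prime k then 1 - (of_nat k :: complex) powr (- w) else 1)" for k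
  have "summable (\<lambda>k. real k powr (- Re w))"
    using w by (simp add: summable_real_powr_iff)
  then have "summable (\<lambda>k. norm (f k - 1))"
    by (rule summable_comparison_test') (simp add: f_def norm_powr_of_nat)
  then have "(\<lambda>n. \<Prod>k<n. f k) \<longlonglongrightarrow> prodinf f"
    by (rule partial_prods_tendsto_prodinf(2))
  then have W: "(\<lambda>x. \<Prod>p\<in>primes_below x. 1 - of_nat p powr (- w)) \<longlonglongrightarrow> prodinf f"
    by (simp add: f_def prod_lessThan_if_prime)
  have "(\<Prod>p\<in>primes_below x. 1 / (1 - of_nat p powr (- w))) *
        (\<Prod>p\<in>primes_below x. 1 - of_nat p powr (- w)) = 1" for x
  proof -
    have "of_nat p powr (- w) \<noteq> (1::complex)" if "p \<in> primes_below x" for p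
      using norm_powr_of_prime_less_1[of p w] that w by (auto simp: primes_below_def)
    then show ?thesis by (simp add: prod.distrib[symmetric])
  qed
  moreover have "(\<lambda>x. (\<Prod>p\<in>primes_below x. 1 / (1 - of_nat p powr (- w))) *
      (\<Prod>p\<in>primes_below x. 1 - of_nat p powr (- w))) \<longlonglongrightarrow> zeta_series w * prodinf f"
    by (intro tendsto_mult zeta_Euler_product w W)
  ultimately have "zeta_series w * prodinf f = 1"
    by (simp add: LIMSEQ_const_iff)
  then show ?thesis using W inverse_unique by metis
qed

lemma F_factor_eq_G_factor:
  assumes "prime p" "\<And>h. h \<in> {1..N} \<Longrightarrow> Re (s h) > 0"
  shows "F_factor N s p = G_factor N s p * (\<Prod>h\<in>{1..N}. 1 - of_nat p powr (- s h))"
proof -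
  have "of_nat p powr (- s h) \<noteq> (1::complex)" if "h \<in> {1..N}" for h
    using norm_powr_of_prime_less_1[OF \<open>prime p\<close> assms(2)[OF that]] by auto
  then have "chain_poly {1..N} (\<lambda>h. of_nat p powr (- s h)) =
      G_factor N s p * (\<Prod>h\<in>{1..N}. 1 - of_nat p powr (- s h))"
    unfolding G_factor_def by (intro chain_poly_eq_sum_times_prod) auto
  then show ?thesis
    using assms(1) by (simp add: F_factor_def)
qed

lemma F_prod_eq_F_series:
  assumes "s \<in> half_region N 1"
  shows "F_prod N s = F_series N s"
proof -
  have s: "\<And>h. h \<in> {1..N} \<Longrightarrow> Re (s h) > 1" using assms by (auto simp: half_region_def)
  then have s0: "\<And>h. h \<in> {1..N} \<Longrightarrow> Re (s h) > 0" by force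
  have "(\<Prod>k<m. F_factor N s k) = (\<Prod>p\<in>primes_below m. G_factor N s p) *
      (\<Prod>h\<in>{1..N}. \<Prod>p\<in>primes_below m. 1 - of_nat p powr (- s h))" for m
  proof -
    have "(\<Prod>k<m. F_factor N s k) = (\<Prod>k<m. if prime k then F_factor N s k else 1)"
      by (intro prod.cong) (simp_all add: F_factor_def)
    also have "\<dots> = (\<Prod>p\<in>primes_below m. F_factor N s p)"
      by (rule prod_lessThan_if_prime)
    also have "\<dots> = (\<Prod>p\<in>primes_below m. G_factor N s p * (\<Prod>h\<in>{1..N}. 1 - of_nat p powr (- s h)))"
      using s0 by (intro prod.cong refl F_factor_eq_G_factor) (auto simp: primes_below_def)
    finally show ?thesis by (simp add: prod.distrib prod.swap[of _ "primes_below m"])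
  qed
  moreover have "(\<lambda>m. (\<Prod>p\<in>primes_below m. G_factor N s p) *
      (\<Prod>h\<in>{1..N}. \<Prod>p\<in>primes_below m. 1 - of_nat p powr (- s h))) \<longlonglongrightarrow> F_series N s"
    unfolding F_series_def using s
    by (intro tendsto_mult tendsto_G_series tendsto_prod inverse_zeta_Euler_product) auto
  ultimately show ?thesis
    unfolding F_prod_def by (simp add: limI)
qed

section \<open>Counting chains at \<open>s = 1\<close>\<close>

definition chain_count :: "'a::comm_semiring_1 \<Rightarrow> nat set \<Rightarrow> 'a" where
  "chain_count t X = (\<Sum>C\<in>bit_chains X. t ^ card C)"

definition bit_lower :: "nat \<Rightarrow> nat set" where
  "bit_lower h = {l. 1 \<le> l \<and> bit_le l h}"

lemma of_real_chain_count: "of_real (chain_count t X) = chain_count (of_real t) X"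
  by (simp add: chain_count_def)

lemma chain_poly_const:
  fixes x :: "'a::field"
  assumes "finite X" "x \<noteq> 1"
  shows "chain_poly X (\<lambda>_. x) = (1 - x) ^ card X * chain_count (x / (1 - x)) X"
  unfolding chain_poly_def chain_count_def sum_distrib_left
proof (intro sum.cong refl)
  fix C assume "C \<in> bit_chains X"
  then have "C \<subseteq> X" by (simp add: bit_chains_def)
  then have "card X = card C + card (X - C)"
    using \<open>finite X\<close> by (simp add: card_Diff_subset card_mono finite_subset)
  then have "(1 - x) ^ card X * (x / (1 - x)) ^ card C = x ^ card C * (1 - x) ^ card (X - C)"
    using assms(2) by (simp add: power_add power_divide)
  then show "(\<Prod>h\<in>C. x) * (\<Prod>h\<in>X - C. 1 - x) = (1 - x) ^ card X * (x / (1 - x)) ^ card C"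
    by simp
qed

lemma finite_bit_lower: "finite (bit_lower h)"
  by (rule finite_subset[of _ "{..h}"]) (auto simp: bit_lower_def bit_le_imp_le)

lemma sum_insert_bit_chains:
  assumes "finite X" "l \<notin> X"
  shows "(\<Sum>C\<in>insert l ` bit_chains X. t ^ card C) = t * chain_count t X"
proof -
  have "inj_on (insert l) (bit_chains X)"
    using assms(2) by (intro inj_onI) (auto simp: bit_chains_def)
  moreover have "t ^ card (insert l C) = t * t ^ card C" if "C \<in> bit_chains X" for C
  proof -
    have "finite C" "l \<notin> C"
      using that assms finite_bit_chain[OF assms(1)] by (auto simp: bit_chains_def)
    then show ?thesis by simp
  qed
  ultimately show ?thesis
    by (simp add: sum.reindex chain_count_def sum_distrib_left)
qed

lemma chain_count_bit_lower_remove_top: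
  assumes "h \<ge> 1"
  shows "chain_count t (bit_lower h) = (1 + t) * chain_count t (bit_lower h - {h})"
proof -
  let ?A = "bit_chains (bit_lower h - {h})"
  have "finite ?A" by (intro finite_bit_chains) (simp add: finite_bit_lower)
  have "h \<in> bit_lower h" using assms by (simp add: bit_lower_def)
  \<comment> \<open>\<open>h\<close> is comparable with everything below it, so it can be added to any chain\<close>
  then have split: "bit_chains (bit_lower h) = ?A \<union> insert h ` ?A"
  proof (intro equalityI subsetI)
    fix C assume C: "C \<in> bit_chains (bit_lower h)"
    show "C \<in> ?A \<union> insert h ` ?A"
    proof (cases "h \<in> C")
      case True
      then have "C - {h} \<in> ?A" "C = insert h (C - {h})" using C by (auto simp: bit_chains_def)
      then show ?thesis by blast
    qed (use C in \<open>auto simp: bit_chains_def\<close>)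
  qed (auto simp: bit_chains_def bit_lower_def)
  moreover have "?A \<inter> insert h ` ?A = {}" by (auto simp: bit_chains_def)
  ultimately show ?thesis
    using \<open>finite ?A\<close> sum_insert_bit_chains[of "bit_lower h - {h}" h t]
    by (simp add: chain_count_def sum.union_disjoint finite_bit_lower algebra_simps)
qed

lemma bit_chains_with_max:
  assumes "l \<in> bit_lower h"
  shows "{C \<in> bit_chains (bit_lower h) - {{}}. Max C = l} = insert l ` bit_chains (bit_lower l - {l})"
proof (intro equalityI subsetI)
  fix C assume C: "C \<in> {C \<in> bit_chains (bit_lower h) - {{}}. Max C = l}"
  then have "finite C" "C \<noteq> {}" "C \<in> bit_chains (bit_lower h)" "Max C = l"
    using finite_bit_chain[OF finite_bit_lower] by auto
  then have "l \<in> C" using Max_in by blast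
  have "a \<in> bit_lower l - {l}" if "a \<in> C" "a \<noteq> l" for a
  proof -
    have "a \<le> l" using \<open>finite C\<close> \<open>Max C = l\<close> that(1) by auto
    moreover have "bit_le a l \<or> bit_le l a"
      using \<open>C \<in> bit_chains _\<close> \<open>l \<in> C\<close> that(1) by (auto simp: bit_chains_def)
    ultimately have "bit_le a l" using that(2) bit_le_imp_le by fastforce
    then show ?thesis
      using that \<open>C \<in> bit_chains _\<close> by (auto simp: bit_chains_def bit_lower_def)
  qed
  then have "C - {l} \<in> bit_chains (bit_lower l - {l})"
    using \<open>C \<in> bit_chains _\<close> by (auto simp: bit_chains_def)
  then show "C \<in> insert l ` bit_chains (bit_lower l - {l})"
    using \<open>l \<in> C\<close> by (auto intro!: image_eqI[of _ _ "C - {l}"])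
next
  fix C assume "C \<in> insert l ` bit_chains (bit_lower l - {l})"
  then obtain D where D: "D \<in> bit_chains (bit_lower l - {l})" "C = insert l D" by blast
  then have below: "bit_le a l" "1 \<le> a" if "a \<in> D" for a
    using that by (auto simp: bit_chains_def bit_lower_def)
  have "finite D" using D(1) finite_bit_chain[OF finite_subset] finite_bit_lower
    by (meson Diff_subset)
  have "insert l D \<in> bit_chains (bit_lower h)"
    using D(1) assms below by (auto simp: bit_chains_def bit_lower_def intro: bit_le_trans)
  moreover have "Max (insert l D) = l"
    using \<open>finite D\<close> below bit_le_imp_le by (intro Max_eqI) auto
  ultimately show "C \<in> {C \<in> bit_chains (bit_lower h) - {{}}. Max C = l}" using D(2) by auto
qed

text \<open>Group the nonempty chains by their largest element.\<close>
lemma chain_count_bit_lower_rec: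
  "chain_count t (bit_lower h) = 1 + t * (\<Sum>l\<in>bit_lower h. chain_count t (bit_lower l - {l}))"
proof -
  let ?S = "bit_chains (bit_lower h)"
  have "finite ?S" by (intro finite_bit_chains finite_bit_lower)
  have "{} \<in> ?S" by (simp add: bit_chains_def)
  then have "chain_count t (bit_lower h) = t ^ card ({}::nat set) + (\<Sum>C\<in>?S - {{}}. t ^ card C)"
    unfolding chain_count_def by (rule sum.remove[OF \<open>finite ?S\<close>])
  then have "chain_count t (bit_lower h) = 1 + (\<Sum>C\<in>?S - {{}}. t ^ card C)"
    by simp
  also have "(\<Sum>C\<in>?S - {{}}. t ^ card C) = (\<Sum>l\<in>bit_lower h. \<Sum>C\<in>{C\<in>?S - {{}}. Max C = l}. t ^ card C)"
  proof (rule sum.group[symmetric])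
    show "Max ` (?S - {{}}) \<subseteq> bit_lower h"
    proof
      fix l assume "l \<in> Max ` (?S - {{}})"
      then obtain C where C: "C \<in> ?S" "C \<noteq> {}" "l = Max C" by blast
      then have "l \<in> C" using finite_bit_chain[OF finite_bit_lower] Max_in by blast
      then show "l \<in> bit_lower h" using C(1) by (auto simp: bit_chains_def)
    qed
  qed (use \<open>finite ?S\<close> finite_bit_lower in auto)
  also have "\<dots> = (\<Sum>l\<in>bit_lower h. t * chain_count t (bit_lower l - {l}))"
  proof (intro sum.cong refl)
    fix l assume "l \<in> bit_lower h"
    show "(\<Sum>C\<in>{C\<in>?S - {{}}. Max C = l}. t ^ card C) = t * chain_count t (bit_lower l - {l})"
      unfolding bit_chains_with_max[OF \<open>l \<in> bit_lower h\<close>]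
      by (rule sum_insert_bit_chains) (simp_all add: finite_bit_lower)
  qed
  finally show ?thesis by (simp add: sum_distrib_left)
qed

lemma chain_count_bit_lower_rec':
  fixes t :: "'a::field"
  assumes "1 + t \<noteq> 0"
  shows "chain_count t (bit_lower h) = 1 + t / (1 + t) * (\<Sum>l\<in>bit_lower h. chain_count t (bit_lower l))"
proof -
  have "chain_count t (bit_lower l - {l}) = chain_count t (bit_lower l) / (1 + t)"
    if "l \<in> bit_lower h" for l
    using that assms chain_count_bit_lower_remove_top[of l t] by (simp add: bit_lower_def)
  then have "(\<Sum>l\<in>bit_lower h. chain_count t (bit_lower l - {l})) =
      (\<Sum>l\<in>bit_lower h. chain_count t (bit_lower l)) / (1 + t)"
    by (simp add: sum_divide_distrib)
  then show ?thesis
    by (subst chain_count_bit_lower_rec[of t h]) simp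
qed

definition bit_set :: "nat \<Rightarrow> nat set" where
  "bit_set h = {j. bit h j}"

lemma finite_bit_set: "finite (bit_set h)"
proof (rule finite_subset[of _ "{..<h}"])
  show "bit_set h \<subseteq> {..<h}"
  proof
    fix j assume "j \<in> bit_set h"
    then have "2 ^ j \<le> h"
      by (metis bit_iff_odd bit_set_def div_less even_zero mem_Collect_eq not_le)
    then have "j < h" using less_exp[of j] by linarith
    then show "j \<in> {..<h}" by simp
  qed
qed simp

lemma bit_set_inj: "bit_set a = bit_set b \<Longrightarrow> a = b"
  by (rule bit_eqI) (auto simp: bit_set_def set_eq_iff)

lemma bit_set_eq_empty_iff: "bit_set a = {} \<longleftrightarrow> a = 0"
  using bit_set_inj[of a 0] by (auto simp: bit_set_def)

lemma bit_le_iff_bit_set_subset: "bit_le a b \<longleftrightarrow> bit_set a \<subseteq> bit_set b"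
  by (auto simp: bit_le_def bit_set_def)

lemma bit_set_surj:
  assumes "finite S"
  obtains l where "bit_set l = S"
proof -
  obtain M where M: "S \<subseteq> {..<M}"
    using assms finite_nat_bounded by blast
  define l :: nat where "l = horner_sum of_bool 2 (map (\<lambda>j. j \<in> S) [0..<M])"
  have "bit l j \<longleftrightarrow> j \<in> S" for j
    using M unfolding l_def bit_horner_sum_bit_iff by auto
  then show ?thesis by (intro that[of l]) (auto simp: bit_set_def)
qed

lemma bit_mask_nat: "bit ((2::nat) ^ n - 1) j \<longleftrightarrow> j < n"
proof -
  have "(2::nat) ^ n - 1 = mask n" by (simp add: mask_eq_exp_minus_1)
  then show ?thesis by (simp add: bit_mask_iff)
qed

lemma bit_set_mask: "bit_set (2 ^ n - 1) = {..<n}"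
  unfolding bit_set_def bit_mask_nat by auto

lemma bit_lower_mask: "bit_lower (2 ^ n - 1) = {1..2 ^ n - 1}"
proof -
  have "bit_le l (2 ^ n - 1) \<longleftrightarrow> l < 2 ^ n" for l
  proof -
    have "bit_le l (2 ^ n - 1) \<longleftrightarrow> take_bit n l = l"
    proof
      assume "bit_le l (2 ^ n - 1)"
      then have "bit l j \<longrightarrow> j < n" for j unfolding bit_le_def bit_mask_nat by blast
      then show "take_bit n l = l"
        by (intro bit_eqI) (auto simp: bit_take_bit_iff)
    next
      assume "take_bit n l = l"
      then show "bit_le l (2 ^ n - 1)"
        unfolding bit_le_def bit_mask_nat by (metis bit_take_bit_iff)
    qed
    then show ?thesis by (simp add: take_bit_nat_eq_self_iff)
  qed
  moreover have "l < 2 ^ n \<longleftrightarrow> l \<le> 2 ^ n - 1" for l :: nat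
    using one_le_power[of "2::nat" n] by linarith
  ultimately have le_mask: "bit_le l (2 ^ n - 1) \<longleftrightarrow> l \<le> 2 ^ n - 1" for l
    by blast
  show ?thesis
    by (rule set_eqI) (simp only: bit_lower_def mem_Collect_eq atLeastAtMost_iff le_mask)
qed

lemma sum_proper_subsets_by_card:
  fixes f :: "nat \<Rightarrow> 'a::comm_semiring_1"
  assumes "finite B"
  shows "(\<Sum>S\<in>Pow B - {{}, B}. f (card S)) = (\<Sum>j\<in>{1..<card B}. of_nat (card B choose j) * f j)"
proof -
  have "(\<Sum>S\<in>Pow B - {{}, B}. f (card S)) =
      (\<Sum>j\<in>{1..<card B}. \<Sum>S\<in>{S\<in>Pow B - {{}, B}. card S = j}. f (card S))"
  proof (rule sum.group[symmetric])
    show "card ` (Pow B - {{}, B}) \<subseteq> {1..<card B}"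
    proof
      fix j assume "j \<in> card ` (Pow B - {{}, B})"
      then obtain S where S: "S \<subseteq> B" "S \<noteq> {}" "S \<noteq> B" "j = card S" by auto
      then have "finite S" using assms finite_subset by blast
      moreover have "card S < card B" using S assms by (intro psubset_card_mono) auto
      ultimately show "j \<in> {1..<card B}" using S by (simp add: Suc_le_eq card_gt_0_iff)
    qed
  qed (use assms in auto)
  also have "\<dots> = (\<Sum>j\<in>{1..<card B}. of_nat (card B choose j) * f j)"
  proof (intro sum.cong refl)
    fix j assume "j \<in> {1..<card B}"
    then have "{S\<in>Pow B - {{}, B}. card S = j} = {S. S \<subseteq> B \<and> card S = j}" by auto
    then show "(\<Sum>S\<in>{S\<in>Pow B - {{}, B}. card S = j}. f (card S)) = of_nat (card B choose j) * f j"
      using n_subsets[OF assms, of j] by simp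
  qed
  finally show ?thesis .
qed

lemma sum_proper_bit_lower:
  fixes f :: "nat \<Rightarrow> 'a::comm_semiring_1"
  assumes "h \<ge> 1"
  shows "(\<Sum>l\<in>bit_lower h - {h}. f (card (bit_set l))) =
         (\<Sum>j\<in>{1..<card (bit_set h)}. of_nat (card (bit_set h) choose j) * f j)"
proof -
  have "bij_betw bit_set (bit_lower h - {h}) (Pow (bit_set h) - {{}, bit_set h})"
  proof (rule bij_betw_imageI)
    show "inj_on bit_set (bit_lower h - {h})" by (rule inj_onI) (rule bit_set_inj)
    show "bit_set ` (bit_lower h - {h}) = Pow (bit_set h) - {{}, bit_set h}"
    proof (intro equalityI subsetI)
      fix S assume S: "S \<in> Pow (bit_set h) - {{}, bit_set h}"
      then have "finite S" using finite_bit_set finite_subset by auto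
      then obtain l where l: "bit_set l = S" by (rule bit_set_surj)
      then have "l \<noteq> 0" "bit_le l h" "l \<noteq> h"
        using S bit_set_eq_empty_iff[of l] by (auto simp: bit_le_iff_bit_set_subset)
      then have "l \<in> bit_lower h - {h}" by (simp add: bit_lower_def)
      then show "S \<in> bit_set ` (bit_lower h - {h})" using l by blast
    next
      fix S assume "S \<in> bit_set ` (bit_lower h - {h})"
      then obtain l where "l \<in> bit_lower h" "l \<noteq> h" "S = bit_set l" by blast
      then show "S \<in> Pow (bit_set h) - {{}, bit_set h}"
        using bit_set_eq_empty_iff[of l] bit_set_inj[of l h]
        by (auto simp: bit_lower_def bit_le_iff_bit_set_subset)
    qed
  qed
  then have "(\<Sum>l\<in>bit_lower h - {h}. f (card (bit_set l))) =
      (\<Sum>S\<in>Pow (bit_set h) - {{}, bit_set h}. f (card S))"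
    by (rule sum.reindex_bij_betw)
  also have "\<dots> = (\<Sum>j\<in>{1..<card (bit_set h)}. of_nat (card (bit_set h) choose j) * f j)"
    by (rule sum_proper_subsets_by_card[OF finite_bit_set])
  finally show ?thesis .
qed

definition geometric_moment :: "real \<Rightarrow> nat \<Rightarrow> real" where
  "geometric_moment x m = (1 - x) * (\<Sum>k. real (k + 1) ^ m * x ^ k)"

lemma summable_power_times_geometric:
  fixes x :: real
  assumes "\<bar>x\<bar> < 1"
  shows "summable (\<lambda>k. real k ^ m * x ^ k)"
  using assms
proof (induction m arbitrary: x)
  case (Suc m)
  have "summable (\<lambda>k. diffs (\<lambda>k. real k ^ m) k * x ^ k)"
    by (rule termdiff_converges[of x 1]) (use Suc in auto)
  then have "summable (\<lambda>k. real (Suc k) ^ Suc m * x ^ k)"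
    by (simp add: diffs_def)
  then show ?case
    using summable_powser_split_head[of "\<lambda>k. real k ^ Suc m" x] by simp
qed (simp add: summable_geometric)

lemma summable_Suc_power_times_geometric:
  fixes x :: real
  assumes "\<bar>x\<bar> < 1"
  shows "summable (\<lambda>k. real (k + 1) ^ m * x ^ k)"
  using summable_power_times_geometric[OF assms, of m]
    summable_powser_split_head[of "\<lambda>k. real k ^ m" x] by simp

lemma geometric_moment_0: "\<bar>x\<bar> < 1 \<Longrightarrow> geometric_moment x 0 = 1"
  unfolding geometric_moment_def by (simp add: suminf_geometric)

lemma geometric_moment_binomial:
  fixes x :: real
  assumes x: "\<bar>x\<bar> < 1"
  shows "x * (\<Sum>j\<le>m. real (m choose j) * geometric_moment x j) = geometric_moment x m - (1 - x)"
proof -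
  let ?g = "\<lambda>k. real (k + 1) ^ m * x ^ k"
  let ?b = "\<lambda>k. \<Sum>j\<le>m. real (m choose j) * (real (k + 1) ^ j * x ^ k)"
  note summable = summable_Suc_power_times_geometric[OF x]
  have "(\<Sum>j\<le>m. real (m choose j) * (\<Sum>k. real (k + 1) ^ j * x ^ k)) = (\<Sum>k. ?b k)"
    using summable by (simp add: suminf_mult suminf_sum)
  moreover have "summable ?b"
    using summable by (intro summable_sum summable_mult)
  ultimately have "x * (\<Sum>j\<le>m. real (m choose j) * (\<Sum>k. real (k + 1) ^ j * x ^ k)) =
      (\<Sum>k. x * ?b k)"
    by (simp add: suminf_mult)
  also have "\<dots> = (\<Sum>k. ?g (Suc k))"
  proof (rule suminf_cong)
    fix k
    have "?b k = x ^ k * (\<Sum>j\<le>m. real (m choose j) * real (k + 1) ^ j * 1 ^ (m - j))"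
      by (simp add: sum_distrib_left mult_ac)
    also have "\<dots> = x ^ k * (real (k + 1) + 1) ^ m"
      by (simp only: binomial_ring)
    finally show "x * ?b k = ?g (Suc k)" by (simp add: add.commute)
  qed
  also have "\<dots> = (\<Sum>k. ?g k) - 1"
    using suminf_split_head[OF summable[of m]] by simp
  finally have A: "x * (\<Sum>j\<le>m. real (m choose j) * (\<Sum>k. real (k + 1) ^ j * x ^ k)) =
      (\<Sum>k. ?g k) - 1" .
  have "(\<Sum>j\<le>m. real (m choose j) * geometric_moment x j) =
      (1 - x) * (\<Sum>j\<le>m. real (m choose j) * (\<Sum>k. real (k + 1) ^ j * x ^ k))"
    unfolding geometric_moment_def by (simp add: sum_distrib_left mult_ac)
  then have "x * (\<Sum>j\<le>m. real (m choose j) * geometric_moment x j) = (1 - x) * ((\<Sum>k. ?g k) - 1)"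
    by (simp only: mult.left_commute[of x] A)
  then show ?thesis
    by (simp add: geometric_moment_def right_diff_distrib)
qed

lemma geometric_moment_rec:
  fixes x :: real
  assumes "\<bar>x\<bar> < 1" "m \<ge> 1"
  shows "(1 - x) * geometric_moment x m =
           1 + x * (\<Sum>j\<in>{1..<m}. real (m choose j) * geometric_moment x j)"
proof -
  have "{..m} = insert 0 (insert m {1..<m})" using assms(2) by auto
  then have "(\<Sum>j\<le>m. real (m choose j) * geometric_moment x j) =
      geometric_moment x 0 + (geometric_moment x m +
        (\<Sum>j\<in>{1..<m}. real (m choose j) * geometric_moment x j))"
    using assms(2) by simp
  then show ?thesis
    using geometric_moment_binomial[OF assms(1), of m] geometric_moment_0[OF assms(1)]
    by (simp add: algebra_simps)
qed

lemma chain_count_bit_lower_rec_real: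
  fixes x :: real
  assumes x: "0 < x" "x < 1" and "h \<ge> 1"
  shows "(1 - x) * chain_count (x / (1 - x)) (bit_lower h) =
           1 + x * (\<Sum>l\<in>bit_lower h - {h}. chain_count (x / (1 - x)) (bit_lower l))"
proof -
  let ?t = "x / (1 - x)"
  let ?c = "chain_count ?t (bit_lower h)" and ?S = "\<Sum>l\<in>bit_lower h - {h}. chain_count ?t (bit_lower l)"
  have "1 + ?t \<noteq> 0" "?t / (1 + ?t) = x" using x by (simp_all add: field_simps)
  then have rec: "?c = 1 + x * (\<Sum>l\<in>bit_lower h. chain_count ?t (bit_lower l))"
    using chain_count_bit_lower_rec'[of ?t h] by simp
  have "h \<in> bit_lower h" using \<open>h \<ge> 1\<close> by (simp add: bit_lower_def)
  then have "(\<Sum>l\<in>bit_lower h. chain_count ?t (bit_lower l)) = ?c + ?S"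
    by (rule sum.remove[OF finite_bit_lower])
  then have "?c = 1 + x * ?c + x * ?S"
    by (subst rec) (simp only: distrib_left add.assoc)
  moreover have "(1 - x) * ?c = ?c - x * ?c" by (simp add: left_diff_distrib)
  ultimately show ?thesis by linarith
qed

lemma chain_count_bit_lower:
  fixes x :: real
  assumes x: "0 < x" "x < 1"
  shows "chain_count (x / (1 - x)) (bit_lower h) = geometric_moment x (card (bit_set h))"
proof (induction h rule: less_induct)
  case (less h)
  show ?case
  proof (cases "h = 0")
    case True
    then have "bit_lower h = {}" using bit_le_imp_le by (force simp: bit_lower_def)
    then show ?thesis
      using True geometric_moment_0 x by (simp add: bit_set_def chain_count_def bit_chains_empty)
  next
    case False
    let ?m = "card (bit_set h)"
    have "(\<Sum>l\<in>bit_lower h - {h}. chain_count (x / (1 - x)) (bit_lower l)) =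
        (\<Sum>l\<in>bit_lower h - {h}. geometric_moment x (card (bit_set l)))"
    proof (intro sum.cong refl)
      fix l assume "l \<in> bit_lower h - {h}"
      then have "l < h" using bit_le_imp_le[of l h] by (auto simp: bit_lower_def)
      then show "chain_count (x / (1 - x)) (bit_lower l) = geometric_moment x (card (bit_set l))"
        by (rule less.IH)
    qed
    also have "\<dots> = (\<Sum>j\<in>{1..<?m}. real (?m choose j) * geometric_moment x j)"
      using False by (intro sum_proper_bit_lower) simp
    finally have "(1 - x) * chain_count (x / (1 - x)) (bit_lower h) =
        1 + x * (\<Sum>j\<in>{1..<?m}. real (?m choose j) * geometric_moment x j)"
      using chain_count_bit_lower_rec_real[OF x, of h] False by simp
    also have "\<dots> = (1 - x) * geometric_moment x ?m"
      using False x finite_bit_set bit_set_eq_empty_iff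
      by (intro geometric_moment_rec[symmetric]) (auto simp: Suc_le_eq card_gt_0_iff)
    finally show ?thesis using x by simp
  qed
qed

lemma F_factor_one_point:
  assumes "prime p"
  shows "F_factor (2 ^ n - 1) (one_point (2 ^ n - 1)) p =
           of_real ((1 - 1 / real p) ^ (2 ^ n - 1) * geometric_moment (1 / real p) n)"
proof -
  define N :: nat where "N = 2 ^ n - 1"
  define x where "x = 1 / real p"
  have "real p > 1" using assms prime_gt_1_nat by auto
  then have x: "0 < x" "x < 1" by (auto simp: x_def)
  have "F_factor N (one_point N) p = chain_poly {1..N} (\<lambda>h. of_nat p powr (- one_point N h))"
    using assms by (simp add: F_factor_def)
  also have "\<dots> = chain_poly {1..N} (\<lambda>_. complex_of_real x)"
    by (rule chain_poly_cong) (simp add: one_point_def x_def powr_minus inverse_eq_divide)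
  also have "\<dots> = of_real ((1 - x) ^ N * chain_count (x / (1 - x)) {1..N})"
    using x by (simp add: chain_poly_const of_real_chain_count)
  also have "chain_count (x / (1 - x)) {1..N} = geometric_moment x n"
    using chain_count_bit_lower[OF x, of N] unfolding N_def bit_lower_mask bit_set_mask by simp
  finally show ?thesis by (simp add: N_def x_def)
qed

lemma has_sum_geometric_moment:
  fixes x :: real
  assumes x: "0 \<le> x" "x < 1" and "n \<ge> 1"
  shows "((\<lambda>k. (real (k + 1) ^ n - real k ^ n) * x ^ k) has_sum (geometric_moment x n - 1)) {1..}"
proof -
  define a where "a k = (real (k + 1) ^ n - real k ^ n) * x ^ k" for k
  have "\<bar>x\<bar> < 1" using x by simp
  note s1 = summable_Suc_power_times_geometric[OF this, of n]
    and s2 = summable_power_times_geometric[OF this, of n]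
  \<comment> \<open>the second series is the first one shifted, because \<open>0 ^ n = 0\<close>\<close>
  have zero_power_n: "(0::real) ^ n = 0" using \<open>n \<ge> 1\<close> by simp
  then have "(\<Sum>k. real k ^ n * x ^ k) = (\<Sum>k. real (Suc k) ^ n * x ^ Suc k)"
    using suminf_split_head[OF s2] by simp
  also have "\<dots> = (\<Sum>k. x * (real (k + 1) ^ n * x ^ k))"
    by (simp add: mult_ac)
  also have "\<dots> = x * (\<Sum>k. real (k + 1) ^ n * x ^ k)" by (rule suminf_mult[OF s1])
  finally have "a sums geometric_moment x n"
    unfolding a_def geometric_moment_def left_diff_distrib
    using sums_diff[OF summable_sums[OF s1] summable_sums[OF s2]] by (simp add: algebra_simps)
  then have "(\<lambda>k. a (Suc k)) sums (geometric_moment x n - 1)"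
    by (subst sums_Suc_iff) (simp add: a_def zero_power_n)
  moreover have "a k \<ge> 0" for k
    using x by (auto simp: a_def intro!: mult_nonneg_nonneg power_mono)
  ultimately have "((\<lambda>k. a (Suc k)) has_sum (geometric_moment x n - 1)) UNIV"
    by (intro sums_nonneg_imp_has_sum) auto
  then show ?thesis
    unfolding a_def
    by (rule has_sum_reindex_bij_witness[of _ "\<lambda>k. k - 1" "\<lambda>k. k + 1", THEN iffD1, rotated -1])
       auto
qed

lemma euler_factor_eq:
  assumes "n \<ge> 1" "prime p"
  shows "euler_factor n p = (1 - 1 / real p) ^ (2 ^ n - 1) * geometric_moment (1 / real p) n"
proof -
  have "real p > 1" using assms prime_gt_1_nat by auto
  have "(\<lambda>k. (real (k + 1) ^ n - real k ^ n) / real p ^ k) =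
      (\<lambda>k. (real (k + 1) ^ n - real k ^ n) * (1 / real p) ^ k)"
    by (simp add: power_one_over divide_inverse power_inverse)
  then have "(\<Sum>\<^sub>\<infinity>k\<in>{1::nat..}. (real (k + 1) ^ n - real k ^ n) / real p ^ k) =
      geometric_moment (1 / real p) n - 1"
    using has_sum_geometric_moment[of "1 / real p" n] \<open>real p > 1\<close> assms(1)
    by (simp add: infsumI)
  then show ?thesis by (simp add: euler_factor_def)
qed

lemma F_prod_one_point:
  assumes "n \<ge> 1"
  defines "N \<equiv> 2 ^ n - 1" and "e \<equiv> \<lambda>p. if prime p then euler_factor n p else 1"
  shows "e has_prod prodinf e" and "F_prod N (one_point N) = of_real (prodinf e)"
proof -
  have F_e: "F_factor N (one_point N) p = of_real (e p)" for p
  proof (cases "prime p")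
    case True
    then show ?thesis unfolding N_def e_def
      by (simp only: F_factor_one_point[OF True] euler_factor_eq[OF assms(1) True] True if_True)
  qed (simp add: e_def F_factor_def)
  have bound: "norm (e p - 1) \<le> 4 ^ N * real p powr (- 2 * 1)" for p
  proof -
    have "norm (e p - 1) = norm (of_real (e p - 1) :: complex)"
      by (simp only: norm_of_real real_norm_def)
    also have "\<dots> = norm (F_factor N (one_point N) p - 1)"
      by (simp add: F_e)
    also have "\<dots> \<le> 4 ^ N * real p powr (- 2 * 1)"
      by (rule F_factor_bound) (auto simp: one_point_def)
    finally show ?thesis .
  qed
  have "summable (\<lambda>p. 4 ^ N * real p powr (- 2 * 1))"
    by (intro summable_mult) (simp add: summable_real_powr_iff)
  then have summable: "summable (\<lambda>p. norm (e p - 1))"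
    by (rule summable_comparison_test') (use bound in simp)
  then show "e has_prod prodinf e"
    by (rule partial_prods_tendsto_prodinf(1))
  from summable have "(\<lambda>m. \<Prod>p<m. e p) \<longlonglongrightarrow> prodinf e"
    by (rule partial_prods_tendsto_prodinf(2))
  then have "(\<lambda>m. \<Prod>p<m. F_factor N (one_point N) p) \<longlonglongrightarrow> of_real (prodinf e)"
    unfolding F_e of_real_prod[symmetric] by (rule tendsto_of_real)
  then show "F_prod N (one_point N) = of_real (prodinf e)"
    unfolding F_prod_def by (rule limI)
qed

theorem mainTheorem14:
  fixes n :: nat
  assumes "n \<ge> 3"
  defines "N \<equiv> 2 ^ n - 1"
  shows "\<exists>Fc P. multi_holomorphic_on N Fc (1/2) \<and>
           (\<forall>s\<in>half_region N 1. Fc s = F_series N s) \<and>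
           (\<lambda>p. if prime p then euler_factor n p else 1) has_prod P \<and>
           Fc (one_point N) = complex_of_real P"
proof (intro exI conjI)
  let ?e = "\<lambda>p. if prime p then euler_factor n p else 1"
  \<comment> \<open>the argument only needs \<open>n \<ge> 1\<close>\<close>
  have "n \<ge> 1" using assms(1) by simp
  show "multi_holomorphic_on N (F_prod N) (1/2)"
    by (rule multi_holomorphic_F_prod)
  show "\<forall>s\<in>half_region N 1. F_prod N s = F_series N s"
    by (simp add: F_prod_eq_F_series)
  show "?e has_prod prodinf ?e" and "F_prod N (one_point N) = complex_of_real (prodinf ?e)"
    using F_prod_one_point[OF \<open>n \<ge> 1\<close>] unfolding N_def by blast+
qed

end
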